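(* Let $n\ge2$ and $\omega\in\{0,1\}^n$ with $\omega_1=0$ and $\omega_n=1$. For $0\le k\le n$ let $S_k=\sum_{i=1}^k(1-2\omega_i)$ (so $S_0=0$). Then the stabilization time $T(\omega)$ of $\omega$ satisfies $$T(\omega)=\frac n2+\max_{1\le k\le n}S_k-\frac{S_n}{2}-1.$$
   Context: One step of the evolution on $\{0,1\}^n$ replaces simultaneously every occurrence of the consecutive substring "01" by "10" (for every $i$ with $\omega_i=0,\omega_{i+1}=1$ these two bits are swapped). Iterating, one reaches a string of the form $1\cdots10\cdots0$, called stabilized. The stabilization time $T(\omega)$ is the number of steps needed to reach a stabilized string from $\omega$ ($0$ if $\omega$ is already stabilized). *)

theory Defs
  imports Complex_Main
begin

text \<open>Binary strings are lists of bits: True = 1, False = 0. Position i (1-based) is w ! (i - 1).\<close>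

fun step :: "bool list \<Rightarrow> bool list" where
  "step (False # True # rest) = True # False # step rest"
| "step (x # rest) = x # step rest"
| "step [] = []"

definition stabilized :: "bool list \<Rightarrow> bool" where
  "stabilized w \<longleftrightarrow> (\<exists>a b. w = replicate a True @ replicate b False)"

definition stab_time :: "bool list \<Rightarrow> nat" where
  "stab_time w = (LEAST k. stabilized ((step ^^ k) w))"

definition bitval :: "bool \<Rightarrow> int" where
  "bitval b = (if b then 1 else 0)"

definition S :: "bool list \<Rightarrow> nat \<Rightarrow> int" where
  "S w k = (\<Sum>i = 1..k. 1 - 2 * bitval (w ! (i - 1)))"

end

theory Submission
  imports Defs
begin

(* A cut of w is a position k (0 <= k <= n); its height is
     h(k) = #zeros among w_1..w_k + #ones among w_(k+1)..w_n.
   A cut is proper if it has a zero on its left and a one on its right; a string has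
   no proper cut exactly when it is stabilized.  The potential P(w) is the maximal
   height of a proper cut minus one (and 0 if there is none).
   One step of the dynamics lowers P by exactly one: a swap at cut k (w_k = 0,
   w_(k+1) = 1) lowers h(k) by two, every other cut keeps its height and properness,
   a proper cut of maximal height is always a swap, and a swap of height >= 3 has a
   proper non-swap neighbour one unit lower.  Hence T(w) = P(w).
   Finally h(k) = #ones(w) + S_k; if w_1 = 0 and w_n = 1 the proper cuts are exactly
   k = 1..n-1 and S_n < S_(n-1), so P(w) = #ones(w) + max_k S_k - 1, and
   #ones(w) = (n - S_n)/2 yields the formula. *)

lemma count_list_take_Suc:
  "k < length w \<Longrightarrow>
     count_list (take (Suc k) w) b = count_list (take k w) b + (if w ! k = b then 1 else 0)"
  by (simp add: take_Suc_conv_app_nth)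

lemma count_list_drop:
  "k < length w \<Longrightarrow>
     count_list (drop k w) b = count_list (drop (Suc k) w) b + (if w ! k = b then 1 else 0)"
  by (simp add: Cons_nth_drop_Suc[symmetric])

lemma count_list_take_drop: "count_list (take k w) b + count_list (drop k w) b = count_list w b"
  by (metis append_take_drop_id count_list_append)

section \<open>One step of the dynamics\<close>

lemma length_step [simp]: "length (step w) = length w"
  by (induction w rule: step.induct) auto

text \<open>A step only permutes bits, so it preserves the number of zeros and of ones.\<close>

lemma count_list_step [simp]: "count_list (step w) b = count_list w b"
  by (induction w rule: step.induct) auto

lemma step_append:
  assumes "xs = [] \<or> ys = [] \<or> last xs \<or> \<not> hd ys"
  shows "step (xs @ ys) = step xs @ step ys"
  using assms
proof (induction xs rule: induct_list012)
  case 1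
  then show ?case by simp
next
  case (2 x)
  then show ?case by (cases x; cases ys) auto
next
  case (3 x y zs)
  show ?case
  proof (cases "\<not> x \<and> y")
    case True
    then have "step (zs @ ys) = step zs @ step ys"
      using "3.prems" by (intro "3.IH"(1)) (cases zs; auto)
    then show ?thesis using True by auto
  next
    case False
    have "step (y # zs @ ys) = step (y # zs) @ step ys"
      using "3.prems" "3.IH"(2) by simp
    then show ?thesis using False by (cases x; cases y) auto
  qed
qed

text \<open>Cut k is a swap if the bits on its two sides are 0 and 1: these are exactly
  the places where the step exchanges two bits.\<close>

definition is_swap :: "bool list \<Rightarrow> nat \<Rightarrow> bool" where
  "is_swap w k \<longleftrightarrow> 0 < k \<and> k < length w \<and> \<not> w ! (k - 1) \<and> w ! k"

lemma step_at_non_swap: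
  assumes "k \<le> length w" and "\<not> is_swap w k"
  shows "take k (step w) = step (take k w)" and "drop k (step w) = step (drop k w)"
proof -
  have junction: "take k w = [] \<or> drop k w = [] \<or> last (take k w) \<or> \<not> hd (drop k w)"
  proof (cases "0 < k \<and> k < length w")
    case True
    have "last (take k w) = w ! (k - 1)"
      using True by (subst last_conv_nth) auto
    moreover have "hd (drop k w) = w ! k"
      using True by (simp add: hd_drop_conv_nth)
    ultimately show ?thesis
      using True assms(2) by (simp add: is_swap_def)
  next
    case False
    then have "take k w = [] \<or> drop k w = []"
      using assms(1) by auto
    then show ?thesis by blast
  qed
  have "step w = step (take k w) @ step (drop k w)"
    using step_append[OF junction] by simp
  then show "take k (step w) = step (take k w)" "drop k (step w) = step (drop k w)"
    using assms(1) by (simp_all add: append_eq_conv_conj)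
qed

lemma step_at_swap:
  assumes "is_swap w k"
  shows "step w = step (take (k - 1) w) @ True # False # step (drop (Suc k) w)"
proof -
  from assms have k: "0 < k" "k < length w" "\<not> w ! (k - 1)" "w ! k"
    by (auto simp: is_swap_def)
  have "drop (k - 1) w = w ! (k - 1) # drop k w"
    using k Cons_nth_drop_Suc[of "k - 1" w] by simp
  also have "drop k w = w ! k # drop (Suc k) w"
    using k Cons_nth_drop_Suc[of k w] by simp
  finally have "drop (k - 1) w = False # True # drop (Suc k) w"
    using k by simp
  then have "step w = step (take (k - 1) w @ False # True # drop (Suc k) w)"
    by (metis append_take_drop_id)
  also have "\<dots> = step (take (k - 1) w) @ step (False # True # drop (Suc k) w)"
    by (rule step_append) simp
  finally show ?thesis by simp
qed

section \<open>Cuts and their heights\<close>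

text \<open>The height of cut k: zeros to its left plus ones to its right, i.e. the
  number of bits that are on the wrong side of k with respect to the final string.\<close>

definition cut_height :: "bool list \<Rightarrow> nat \<Rightarrow> nat" where
  "cut_height w k = count_list (take k w) False + count_list (drop k w) True"

definition proper_cut :: "bool list \<Rightarrow> nat \<Rightarrow> bool" where
  "proper_cut w k \<longleftrightarrow>
     k \<le> length w \<and> 0 < count_list (take k w) False \<and> 0 < count_list (drop k w) True"

lemma count_list_pos_iff: "0 < count_list xs x \<longleftrightarrow> x \<in> set xs"
  using count_list_0_iff by (metis gr0I less_irrefl)

lemma proper_cut_height: "proper_cut w k \<Longrightarrow> 2 \<le> cut_height w k"
  by (auto simp: proper_cut_def cut_height_def)

lemma proper_cut_bounds: "proper_cut w k \<Longrightarrow> 0 < k \<and> k < length w"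
  by (auto simp: proper_cut_def intro: ccontr)

lemma cut_at_non_swap:
  assumes "k \<le> length w" and "\<not> is_swap w k"
  shows "cut_height (step w) k = cut_height w k"
    and "proper_cut (step w) k \<longleftrightarrow> proper_cut w k"
  using step_at_non_swap[OF assms] assms(1)
  by (simp_all add: cut_height_def proper_cut_def)

lemma cut_at_swap:
  assumes "is_swap w k"
  shows "proper_cut w k" and "cut_height (step w) k + 2 = cut_height w k"
proof -
  from assms have k: "0 < k" "k < length w" "\<not> w ! (k - 1)" "w ! k"
    by (auto simp: is_swap_def)
  have zeros: "count_list (take k w) False = count_list (take (k - 1) w) False + 1"
    using count_list_take_Suc[of "k - 1" w] k by simp
  have ones: "count_list (drop k w) True = count_list (drop (Suc k) w) True + 1"
    using count_list_drop[of k w] k by simp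
  show "proper_cut w k"
    unfolding proper_cut_def using zeros ones k by simp
  have "length (step (take (k - 1) w)) = k - 1"
    using k by simp
  then have "take k (step w) = step (take (k - 1) w) @ [True]"
    and "drop k (step w) = False # step (drop (Suc k) w)"
    using step_at_swap[OF assms] k by simp_all
  then show "cut_height (step w) k + 2 = cut_height w k"
    unfolding cut_height_def using zeros ones by simp
qed

text \<open>A proper cut that is not a swap has a proper neighbour one unit higher:
  on its left a one may be moved to the right side, or on its right a zero to the left.\<close>

lemma non_swap_cut_climbs:
  assumes "proper_cut w k" and "\<not> is_swap w k"
  shows "\<exists>k'. proper_cut w k' \<and> cut_height w k' = cut_height w k + 1"
proof -
  from proper_cut_bounds[OF assms(1)] have k: "0 < k" "k < length w" by auto
  show ?thesis
  proof (cases "w ! (k - 1)")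
    case True
    have "count_list (take k w) False = count_list (take (k - 1) w) False"
      and "count_list (drop (k - 1) w) True = count_list (drop k w) True + 1"
      using count_list_take_Suc[of "k - 1" w] count_list_drop[of "k - 1" w] k True by simp_all
    then have "proper_cut w (k - 1)" "cut_height w (k - 1) = cut_height w k + 1"
      using assms(1) by (auto simp: proper_cut_def cut_height_def)
    then show ?thesis by blast
  next
    case False
    then have "\<not> w ! k"
      using assms(2) k by (auto simp: is_swap_def)
    then have "count_list (take (Suc k) w) False = count_list (take k w) False + 1"
      and "count_list (drop k w) True = count_list (drop (Suc k) w) True"
      using count_list_take_Suc[of k w] count_list_drop[of k w] k by simp_all
    then have "proper_cut w (Suc k)" "cut_height w (Suc k) = cut_height w k + 1"
      using assms(1) k by (auto simp: proper_cut_def cut_height_def)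
    then show ?thesis by blast
  qed
qed

text \<open>A swap cut of height at least three has a proper non-swap neighbour one unit
  lower: one of the two cuts next to the pair 01 still separates a zero from a one.\<close>

lemma swap_cut_descends:
  assumes "is_swap w k" and "3 \<le> cut_height w k"
  shows "\<exists>k'. proper_cut w k' \<and> \<not> is_swap w k' \<and> cut_height w k' + 1 = cut_height w k"
proof -
  from assms(1) have k: "0 < k" "k < length w" "\<not> w ! (k - 1)" "w ! k"
    by (auto simp: is_swap_def)
  have zeros: "count_list (take k w) False = count_list (take (k - 1) w) False + 1"
    and ones: "count_list (drop k w) True = count_list (drop (Suc k) w) True + 1"
    and left: "count_list (drop (k - 1) w) True = count_list (drop k w) True"
    and right: "count_list (take (Suc k) w) False = count_list (take k w) False"
    using count_list_take_Suc[of "k - 1" w] count_list_drop[of k w]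
      count_list_drop[of "k - 1" w] count_list_take_Suc[of k w] k
    by simp_all
  show ?thesis
  proof (cases "0 < count_list (take (k - 1) w) False")
    case True
    then have "proper_cut w (k - 1)" "\<not> is_swap w (k - 1)"
      "cut_height w (k - 1) + 1 = cut_height w k"
      using zeros ones left k by (auto simp: proper_cut_def cut_height_def is_swap_def)
    then show ?thesis by blast
  next
    case False
    then have "0 < count_list (drop (Suc k) w) True"
      using assms(2) zeros ones by (simp add: cut_height_def)
    then have "proper_cut w (Suc k)" "\<not> is_swap w (Suc k)"
      "cut_height w (Suc k) + 1 = cut_height w k"
      using zeros ones right k by (auto simp: proper_cut_def cut_height_def is_swap_def)
    then show ?thesis by blast
  qed
qed

section \<open>The potential\<close>

text \<open>The potential: maximal height of a proper cut minus one, and zero if there is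
  no proper cut (the element 1 in the maximum handles that case).\<close>

definition potential :: "bool list \<Rightarrow> nat" where
  "potential w = Max (insert 1 (cut_height w ` {k. proper_cut w k})) - 1"

lemma finite_proper_cut_heights: "finite (cut_height w ` {k. proper_cut w k})"
  by (rule finite_imageI, rule finite_subset[of _ "{..length w}"]) (auto simp: proper_cut_def)

lemma potential_ge: "proper_cut w k \<Longrightarrow> cut_height w k \<le> potential w + 1"
  using Max_ge[OF finite_insert[THEN iffD2, OF finite_proper_cut_heights],
      of "cut_height w k" 1 w]
  unfolding potential_def by simp

lemma potential_attained:
  assumes "0 < potential w"
  obtains k where "proper_cut w k" and "cut_height w k = potential w + 1"
proof -
  let ?M = "Max (insert 1 (cut_height w ` {k. proper_cut w k}))"
  have "?M \<in> insert 1 (cut_height w ` {k. proper_cut w k})"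
    using finite_proper_cut_heights by (intro Max_in) auto
  moreover have "?M \<noteq> 1"
    using assms unfolding potential_def by auto
  ultimately show ?thesis
    using that assms unfolding potential_def by auto
qed

lemma potential_eqI:
  assumes "\<And>k. proper_cut w k \<Longrightarrow> cut_height w k \<le> d + 1"
    and "d = 0 \<or> (\<exists>k. proper_cut w k \<and> cut_height w k = d + 1)"
  shows "potential w = d"
proof -
  let ?A = "insert 1 (cut_height w ` {k. proper_cut w k})"
  have "finite ?A"
    using finite_proper_cut_heights by simp
  moreover have "\<forall>a\<in>?A. a \<le> d + 1"
    using assms(1) by auto
  moreover have "\<exists>a\<in>?A. d + 1 \<le> a"
    using assms(2) by force
  ultimately have "Max ?A = d + 1"
    by (metis Max_ge Max_in antisym empty_not_insert)
  then show ?thesis unfolding potential_def by simp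
qed

section \<open>Stabilization time equals the potential\<close>

lemma stabilized_no_proper_cut: "stabilized w \<Longrightarrow> \<not> proper_cut w k"
proof -
  assume "stabilized w"
  then obtain a b where w: "w = replicate a True @ replicate b False"
    by (auto simp: stabilized_def)
  show ?thesis
    by (cases "k \<le> a") (auto simp: w proper_cut_def count_list_pos_iff)
qed

lemma no_swap_stabilized:
  assumes "\<And>k. \<not> is_swap w k"
  shows "stabilized w"
  using assms
proof (induction w)
  case Nil
  then show ?case
    unfolding stabilized_def by (metis append_Nil replicate_0)
next
  case (Cons x xs)
  have "\<not> is_swap xs k" for k
    using Cons.prems[of "Suc k"] by (auto simp: is_swap_def)
  then obtain a b where xs: "xs = replicate a True @ replicate b False"
    using Cons.IH unfolding stabilized_def by blast
  show ?case
  proof (cases x)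
    case True
    then have "x # xs = replicate (Suc a) True @ replicate b False"
      by (simp add: xs)
    then show ?thesis unfolding stabilized_def by blast
  next
    case False
    have "a = 0"
    proof (rule ccontr)
      assume "a \<noteq> 0"
      then have "is_swap (x # xs) 1"
        using False by (simp add: is_swap_def xs nth_append)
      then show False using Cons.prems by blast
    qed
    then have "x # xs = replicate 0 True @ replicate (Suc b) False"
      by (simp add: xs False)
    then show ?thesis unfolding stabilized_def by blast
  qed
qed

lemma potential_zero_iff: "potential w = 0 \<longleftrightarrow> stabilized w"
proof
  assume "stabilized w"
  then show "potential w = 0"
    by (intro potential_eqI) (auto dest: stabilized_no_proper_cut)
next
  assume "potential w = 0"
  then have "\<not> is_swap w k" for k
    using cut_at_swap(1) potential_ge proper_cut_height by fastforce
  then show "stabilized w"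
    by (rule no_swap_stabilized)
qed

lemma potential_step:
  assumes "\<not> stabilized w"
  shows "potential (step w) = potential w - 1"
proof (rule potential_eqI)
  have pos: "0 < potential w"
    using assms potential_zero_iff by blast
  have non_swap_low: "cut_height w k \<le> potential w" if "proper_cut w k" "\<not> is_swap w k" for k
    using non_swap_cut_climbs[OF that] potential_ge by fastforce
  fix k
  assume proper: "proper_cut (step w) k"
  then have k: "k \<le> length w"
    by (simp add: proper_cut_def)
  show "cut_height (step w) k \<le> potential w - 1 + 1"
  proof (cases "is_swap w k")
    case True
    then show ?thesis
      using cut_at_swap[OF True] potential_ge[of w k] by simp
  next
    case False
    then show ?thesis
      using proper pos non_swap_low[of k] cut_at_non_swap[OF k False] by simp
  qed
next
  show "potential w - 1 = 0 \<or>
      (\<exists>k. proper_cut (step w) k \<and> cut_height (step w) k = potential w - 1 + 1)"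
  proof (cases "2 \<le> potential w")
    case True
    then have "0 < potential w"
      by simp
    then obtain k0 where k0: "proper_cut w k0" "cut_height w k0 = potential w + 1"
      by (rule potential_attained)
    have "is_swap w k0"
      using non_swap_cut_climbs[OF k0(1)] potential_ge k0(2) by fastforce
    then obtain k where k: "proper_cut w k" "\<not> is_swap w k" "cut_height w k + 1 = cut_height w k0"
      using swap_cut_descends k0 True by fastforce
    then have "k \<le> length w"
      by (simp add: proper_cut_def)
    then show ?thesis
      using k k0 cut_at_non_swap[of k w] by auto
  qed simp
qed

lemma potential_iterate: "j \<le> potential w \<Longrightarrow> potential ((step ^^ j) w) = potential w - j"
proof (induction j)
  case 0
  then show ?case by simp
next
  case (Suc j)
  then have "potential ((step ^^ j) w) \<noteq> 0"
    by simp
  then have "\<not> stabilized ((step ^^ j) w)"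
    using potential_zero_iff[of "(step ^^ j) w"] by simp
  then show ?case
    using potential_step Suc by simp
qed

theorem stab_time_eq_potential: "stab_time w = potential w"
  unfolding stab_time_def
proof (rule Least_equality)
  show "stabilized ((step ^^ potential w) w)"
    using potential_iterate[of "potential w" w] potential_zero_iff by simp
next
  fix j
  assume "stabilized ((step ^^ j) w)"
  then have "potential ((step ^^ j) w) = 0"
    using potential_zero_iff by blast
  then show "potential w \<le> j"
    using potential_iterate[of j w] by (cases "j \<le> potential w") auto
qed

section \<open>The potential in terms of the partial sums S\<close>

lemma S_count: "k \<le> length w \<Longrightarrow>
    S w k = int (count_list (take k w) False) - int (count_list (take k w) True)"
proof (induction k)
  case 0
  then show ?case by (simp add: S_def)
next
  case (Suc k)
  have "S w (Suc k) = S w k + (1 - 2 * bitval (w ! k))"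
    by (simp add: S_def)
  then show ?case
    using Suc by (simp add: take_Suc_conv_app_nth bitval_def)
qed

lemma cut_height_S: "k \<le> length w \<Longrightarrow> int (cut_height w k) = int (count_list w True) + S w k"
  using S_count[of k w] count_list_take_drop[of k w True] by (simp add: cut_height_def)

lemma proper_cut_interior:
  assumes "length w = n" and "w ! 0 = False" and "w ! (n - 1) = True"
    and "1 \<le> k" and "k \<le> n - 1"
  shows "proper_cut w k"
proof -
  have "take k w ! 0 = False" and "0 < length (take k w)"
    using assms by auto
  then have "False \<in> set (take k w)"
    by (metis nth_mem)
  moreover have "drop k w ! (n - 1 - k) = True" and "n - 1 - k < length (drop k w)"
    using assms by auto
  then have "True \<in> set (drop k w)"
    by (metis nth_mem)
  ultimately show ?thesis
    using assms by (auto simp: proper_cut_def count_list_pos_iff)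
qed

text \<open>The last bit is a one, so the maximum of S is already attained before n.\<close>

lemma Max_S_interior:
  assumes "2 \<le> n" and "length w = n" and "w ! (n - 1) = True"
  shows "Max (S w ` {1..n}) = Max (S w ` {1..n - 1})"
proof -
  have "S w n = S w (n - 1) - 1"
    using assms by (cases n) (auto simp: S_def bitval_def)
  moreover have "S w (n - 1) \<le> Max (S w ` {1..n - 1})"
    using assms(1) by (intro Max_ge) auto
  moreover have "{1..n} = insert n {1..n - 1}"
    using assms(1) by auto
  then have "Max (S w ` {1..n}) = max (S w n) (Max (S w ` {1..n - 1}))"
    using assms(1) by (simp del: insert_iff)
  ultimately show ?thesis
    by simp
qed

lemma potential_eq_Max_S:
  assumes "2 \<le> n" and "length w = n" and "w ! 0 = False" and "w ! (n - 1) = True"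
  shows "int (potential w) + 1 = int (count_list w True) + Max (S w ` {1..n})"
proof -
  let ?I = "{1..n - 1}"
  have I: "finite ?I" "?I \<noteq> {}"
    using assms(1) by auto
  have proper_iff: "proper_cut w k \<longleftrightarrow> k \<in> ?I" for k
    using proper_cut_interior[OF assms(2-4)] proper_cut_bounds[of w k] assms(2) by force
  have "proper_cut w 1"
    using proper_iff assms(1) by simp
  then have "0 < potential w"
    using potential_ge[of w 1] proper_cut_height[of w 1] by simp
  then obtain k0 where k0: "proper_cut w k0" "cut_height w k0 = potential w + 1"
    by (rule potential_attained)
  have attained: "potential w + 1 \<in> cut_height w ` ?I"
    using k0 proper_iff by (metis image_eqI)
  have "Max (cut_height w ` ?I) = potential w + 1"
  proof (rule linorder_class.Max_eqI[OF _ _ attained])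
    show "finite (cut_height w ` ?I)"
      using I by simp
    fix h
    assume "h \<in> cut_height w ` ?I"
    then obtain k where "proper_cut w k" "h = cut_height w k"
      using proper_iff by blast
    then show "h \<le> potential w + 1"
      using potential_ge by simp
  qed
  then have "int (potential w) + 1 = Max ((\<lambda>k. int (cut_height w k)) ` ?I)"
    using mono_Max_commute[of int "cut_height w ` ?I"] I by (simp add: mono_def image_image)
  also have "\<dots> = Max ((\<lambda>k. S w k + int (count_list w True)) ` ?I)"
    using cut_height_S assms(2) by (intro arg_cong[where f = Max] image_cong) auto
  also have "\<dots> = int (count_list w True) + Max (S w ` {1..n})"
    using Max_add_commute[OF I, of "S w" "int (count_list w True)"]
      Max_S_interior[OF assms(1,2,4)] by simp
  finally show ?thesis .
qed

theorem lemma1p2: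
  fixes w :: "bool list" and n :: nat
  assumes "n \<ge> 2" and "length w = n"
    and "w ! 0 = False" and "w ! (n - 1) = True"
  shows "real (stab_time w) =
    real n / 2 + real_of_int (Max ((\<lambda>k. S w k) ` {1..n})) - real_of_int (S w n) / 2 - 1"
proof -
  let ?ones = "count_list w True" and ?zeros = "count_list w False"
    and ?M = "Max (S w ` {1..n})"
  have "int (stab_time w) + 1 = int ?ones + ?M"
    using potential_eq_Max_S[OF assms] stab_time_eq_potential by simp
  then have T: "real (stab_time w) = real ?ones + real_of_int ?M - 1"
    using arg_cong[of _ _ real_of_int] by fastforce
  have "S w n = int ?zeros - int ?ones"
    using S_count[of n w] assms(2) by simp
  then have Sn: "real_of_int (S w n) = real ?zeros - real ?ones"
    by simp
  have "?ones + ?zeros = length w"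
    by (induction w) auto
  then have n: "real n = real ?ones + real ?zeros"
    using assms(2) by (metis of_nat_add)
  show ?thesis
    using T Sn n by (simp add: field_simps)
qed

end
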